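(* Let $F$ be a tame Dirichlet species with $F(1)=\emptyset$ (i.e. $F$ is empty on one-element sets). Then the Dirichlet exponential $\exp_D(F)$ is tame and its Dirichlet series satisfies $\widehat{\exp_D(F)}=\exp(\widehat{F})$.
   Context: A species is a functor from the groupoid of finite sets and bijections to $\mathbf{Set}$; it is tame if all its values are finite; a Dirichlet species is one with $F(\emptyset)=\emptyset$. For a tame species $F$, $\widehat{F}(s)=\sum_{n\ge1}\frac{|F(n)|}{n!}n^{-s}$ (formal Dirichlet series), with $F(n)$ the value on an $n$-element set. Formal Dirichlet series multiply by Dirichlet convolution of coefficients, and for $f$ with vanishing coefficient of $1^{-s}$, $\exp(f)=\sum_{m\ge0}f^m/m!$. Dirichlet product: a cartesian decomposition of a finite set $S$ is an ordered pair $(\pi_1,\pi_2)$ of equivalence relations on $S$ such that each $\pi_1$-class meets each $\pi_2$-class in exactly one element; with $S_i$ the set of $\pi_i$-classes, $(F\cdot_D G)(S)=\coprod_{(\pi_1,\pi_2)}F(S_1)\times G(S_2)$. This is symmetric monoidal on Dirichlet species with unit $I$, where $I(S)$ is a singleton if $|S|=1$ and empty otherwise. Dirichlet exponential: $F^n_D=F\cdot_D\cdots\cdot_D F$ ($n$ factors) for $n\ge1$, $F^0_D=I$; the symmetric group $S_n$ acts on $F^n_D$ via the symmetry of $\cdot_D$ (permuting the factors); $\exp_D(F)=\coprod_{n\ge0}F^n_D/S_n$, quotients and coproducts computed pointwise. *)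

theory Defs
  imports Complex_Main "HOL-Library.FSet" "HOL-Combinatorics.Permutations"
begin

text \<open>Universe of labels, closed under forming finite sets of labels
  (needed because the Dirichlet product applies F to sets of equivalence classes).\<close>
datatype V = Atom nat | Node "V fset"

definition lab :: "V set \<Rightarrow> V" where
  "lab C = Node (Abs_fset C)"

text \<open>A species (restricted to the finite subsets of the infinite label universe V):
  object part F and transport Fm sigma S : F(S) \<rightarrow> F(sigma`S) along bijections.\<close>
definition species :: "(V set \<Rightarrow> 'b set) \<Rightarrow> ((V \<Rightarrow> V) \<Rightarrow> V set \<Rightarrow> 'b \<Rightarrow> 'b) \<Rightarrow> bool" where
  "species F Fm \<longleftrightarrow>
     (\<forall>S T \<sigma>. finite S \<longrightarrow> bij_betw \<sigma> S T \<longrightarrow> (\<forall>x\<in>F S. Fm \<sigma> S x \<in> F T)) \<and>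
     (\<forall>S x. finite S \<longrightarrow> x \<in> F S \<longrightarrow> Fm id S x = x) \<and>
     (\<forall>S \<sigma> \<tau> x. finite S \<longrightarrow> inj_on \<sigma> S \<longrightarrow> inj_on \<tau> (\<sigma> ` S) \<longrightarrow> x \<in> F S \<longrightarrow>
          Fm (\<tau> \<circ> \<sigma>) S x = Fm \<tau> (\<sigma> ` S) (Fm \<sigma> S x)) \<and>
     (\<forall>S \<sigma> \<sigma>' x. finite S \<longrightarrow> (\<forall>s\<in>S. \<sigma> s = \<sigma>' s) \<longrightarrow> x \<in> F S \<longrightarrow> Fm \<sigma> S x = Fm \<sigma>' S x)"

definition tame :: "(V set \<Rightarrow> 'b set) \<Rightarrow> bool" where
  "tame F \<longleftrightarrow> (\<forall>S. finite S \<longrightarrow> finite (F S))"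

definition dirichlet_species :: "(V set \<Rightarrow> 'b set) \<Rightarrow> ((V \<Rightarrow> V) \<Rightarrow> V set \<Rightarrow> 'b \<Rightarrow> 'b) \<Rightarrow> bool" where
  "dirichlet_species F Fm \<longleftrightarrow> species F Fm \<and> F {} = {}"

text \<open>n-ary cartesian decomposition: equivalence relations pi_1..pi_n on S such that
  s \<mapsto> (class of s under each pi_i) is a bijection S \<rightarrow> S/pi_1 \<times> ... \<times> S/pi_n.
  For n = 2 this is exactly: every pi_1-class meets every pi_2-class in exactly one element.\<close>
definition cart_decomp :: "V set \<Rightarrow> (V \<times> V) set list \<Rightarrow> bool" where
  "cart_decomp S \<pi>s \<longleftrightarrow> (\<forall>r\<in>set \<pi>s. equiv S r) \<and>
     bij_betw (\<lambda>s. map (\<lambda>r. r `` {s}) \<pi>s) S (listset (map (\<lambda>r. S // r) \<pi>s))"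

definition dpowD :: "(V set \<Rightarrow> 'b set) \<Rightarrow> nat \<Rightarrow> V set \<Rightarrow> ((V \<times> V) set list \<times> 'b list) set" where
  "dpowD F n S = (if n = 0 then (if card S = 1 then {([], [])} else {})
     else {(\<pi>s, xs). length \<pi>s = n \<and> length xs = n \<and> cart_decomp S \<pi>s \<and>
            (\<forall>i<n. xs ! i \<in> F (lab ` (S // (\<pi>s ! i))))})"

definition permact :: "(nat \<Rightarrow> nat) \<Rightarrow> ('r list \<times> 'b list) \<Rightarrow> ('r list \<times> 'b list)" where
  "permact \<sigma> p = (map (\<lambda>i. fst p ! \<sigma> i) [0..<length (fst p)],
                   map (\<lambda>i. snd p ! \<sigma> i) [0..<length (snd p)])"

definition sym_orbit_rel :: "(V set \<Rightarrow> 'b set) \<Rightarrow> nat \<Rightarrow> V set \<Rightarrow>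
    (((V \<times> V) set list \<times> 'b list) \<times> ((V \<times> V) set list \<times> 'b list)) set" where
  "sym_orbit_rel F n S = {(a, b). a \<in> dpowD F n S \<and> b \<in> dpowD F n S \<and>
      (\<exists>\<sigma>. \<sigma> permutes {..<n} \<and> b = permact \<sigma> a)}"

definition expD :: "(V set \<Rightarrow> 'b set) \<Rightarrow> V set \<Rightarrow> (nat \<times> ((V \<times> V) set list \<times> 'b list) set) set" where
  "expD F S = Sigma UNIV (\<lambda>n. dpowD F n S // sym_orbit_rel F n S)"

text \<open>Formal Dirichlet series as coefficient sequences a(n), n \<ge> 1 (a(0) = 0 by convention).\<close>
definition dseries :: "(V set \<Rightarrow> 'b set) \<Rightarrow> nat \<Rightarrow> real" where
  "dseries F n = (if n = 0 then 0 else real (card (F (Atom ` {..<n}))) / fact n)"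

definition dconv :: "(nat \<Rightarrow> real) \<Rightarrow> (nat \<Rightarrow> real) \<Rightarrow> nat \<Rightarrow> real" where
  "dconv f g n = (if n = 0 then 0 else (\<Sum>d | d dvd n. f d * g (n div d)))"

definition dunit :: "nat \<Rightarrow> real" where
  "dunit n = (if n = 1 then 1 else 0)"

primrec dpow :: "(nat \<Rightarrow> real) \<Rightarrow> nat \<Rightarrow> nat \<Rightarrow> real" where
  "dpow f 0 = dunit"
| "dpow f (Suc m) = dconv f (dpow f m)"

text \<open>exp(f) = sum_m f^m/m!, coefficientwise (for f(1) = 0 each coefficient is a finite sum).\<close>
definition dexp :: "(nat \<Rightarrow> real) \<Rightarrow> nat \<Rightarrow> real" where
  "dexp f n = (\<Sum>m. dpow f m n / fact m)"

end

theory Submission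
  imports Defs
begin

text \<open>Number the classes of each factor \<open>\<pi>\<^sub>i\<close> of a cartesian decomposition of \<open>S\<close>
  by \<open>{..<d\<^sub>i}\<close>, where \<open>d\<^sub>i = |S/\<pi>\<^sub>i|\<close>. Such a numbered decomposition is the same
  thing as a bijection of \<open>S\<close> with the box \<open>{..<d\<^sub>1} \<times> \<dots> \<times> {..<d\<^sub>n}\<close>, and there are
  \<open>|S|!\<close> of those for every ordered factorization \<open>d\<^sub>1 \<cdots> d\<^sub>n = |S|\<close>. Since \<open>|F(A)|\<close> only
  depends on \<open>|A|\<close>, this double counting shows that \<open>|F\<^sup>n\<^sub>D(S)|\<close> is \<open>|S|!\<close> times the
  coefficient of \<open>|S|\<^sup>-\<^sup>s\<close> in the \<open>n\<close>-th power of the Dirichlet series of \<open>F\<close>.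

  Because \<open>F\<close> vanishes on one-element sets, the factors of an element of \<open>F\<^sup>n\<^sub>D(S)\<close> are
  pairwise distinct (a repeated factor has at most one class), so \<open>S\<^sub>n\<close> acts freely and
  \<open>|F\<^sup>n\<^sub>D(S)/S\<^sub>n| = |F\<^sup>n\<^sub>D(S)|/n!\<close>. Moreover \<open>F\<^sup>n\<^sub>D(S) = {}\<close> for \<open>n > |S|\<close>, as a
  factorization of \<open>|S|\<close> into more than \<open>|S|\<close> factors contains the factor \<open>1\<close>, whose
  coefficient vanishes. Summing over \<open>n \<le> |S|\<close> gives the coefficients of the exponential.\<close>

definition list_Pi :: "nat \<Rightarrow> (nat \<Rightarrow> 'a set) \<Rightarrow> 'a list set" where
  "list_Pi n A = {xs. length xs = n \<and> (\<forall>i<n. xs ! i \<in> A i)}"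

lemma list_Pi_cong: "(\<And>i. i < n \<Longrightarrow> A i = B i) \<Longrightarrow> list_Pi n A = list_Pi n B"
  by (auto simp: list_Pi_def)

lemma listset_eq_list_Pi: "listset As = list_Pi (length As) ((!) As)"
proof (induction As)
  case (Cons A As)
  show ?case
    unfolding listset.simps Cons.IH
    by (auto simp: set_Cons_def list_Pi_def length_Suc_conv All_less_Suc2)
qed (simp add: list_Pi_def)

lemma bij_betw_list_Pi_PiE: "bij_betw (\<lambda>xs. restrict ((!) xs) {..<n}) (list_Pi n A) (Pi\<^sub>E {..<n} A)"
  by (rule bij_betw_byWitness[where f' = "\<lambda>f. map f [0..<n]"])
     (auto simp: list_Pi_def PiE_def extensional_def intro!: nth_equalityI)

lemma card_list_Pi: "card (list_Pi n A) = (\<Prod>i<n. card (A i))"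
  using bij_betw_same_card[OF bij_betw_list_Pi_PiE] by (simp add: card_PiE)

lemma finite_list_Pi:
  assumes "\<And>i. i < n \<Longrightarrow> finite (A i)"
  shows "finite (list_Pi n A)"
proof -
  have "finite (Pi\<^sub>E {..<n} A)"
    using assms by (intro finite_PiE) auto
  then show ?thesis
    using bij_betw_finite[OF bij_betw_list_Pi_PiE] by blast
qed

lemma nth_image_list_Pi:
  assumes "i < n" and "\<And>j. j < n \<Longrightarrow> A j \<noteq> {}"
  shows "(\<lambda>xs. xs ! i) ` list_Pi n A = A i"
proof (intro equalityI subsetI)
  fix a assume a: "a \<in> A i"
  let ?xs = "map (\<lambda>j. SOME a. a \<in> A j) [0..<n]"
  have "?xs \<in> list_Pi n A"
    using assms(2) by (auto simp: list_Pi_def some_in_eq)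
  then have "?xs[i := a] \<in> list_Pi n A"
    using a assms(1) by (auto simp: list_Pi_def nth_list_update)
  then show "a \<in> (\<lambda>xs. xs ! i) ` list_Pi n A"
    using assms(1) by (force simp: list_Pi_def)
qed (use assms(1) in \<open>auto simp: list_Pi_def\<close>)

lemma bij_betw_list_Pi_map:
  assumes "\<And>i. i < n \<Longrightarrow> bij_betw (h i) (A i) (B i)"
  shows "bij_betw (\<lambda>xs. map (\<lambda>i. h i (xs ! i)) [0..<n]) (list_Pi n A) (list_Pi n B)"
proof -
  have left: "inv_into (A i) (h i) (h i x) = x \<and> h i x \<in> B i" if "i < n" "x \<in> A i" for i x
    using assms[OF that(1)] that(2) by (meson bij_betwE bij_betw_inv_into_left)
  have right: "h i (inv_into (A i) (h i) y) = y \<and> inv_into (A i) (h i) y \<in> A i"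
    if "i < n" "y \<in> B i" for i y
    using assms[OF that(1)] that(2) by (meson bij_betwE bij_betw_inv_into bij_betw_inv_into_right)
  show ?thesis
    by (rule bij_betw_byWitness[where f' = "\<lambda>ys. map (\<lambda>i. inv_into (A i) (h i) (ys ! i)) [0..<n]"])
       (auto simp: list_Pi_def left right intro!: nth_equalityI)
qed

lemma bij_betw_list_Pi_permute:
  assumes "\<sigma> permutes {..<n}"
  shows "bij_betw (\<lambda>xs. map (\<lambda>i. xs ! \<sigma> i) [0..<n]) (list_Pi n A) (list_Pi n (A \<circ> \<sigma>))"
proof (rule bij_betw_byWitness[where f' = "\<lambda>xs. map (\<lambda>i. xs ! inv \<sigma> i) [0..<n]"])
  have \<sigma>: "\<And>i. i < n \<Longrightarrow> \<sigma> i < n" and \<sigma>': "\<And>i. i < n \<Longrightarrow> inv \<sigma> i < n"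
    using permutes_in_image[OF assms] permutes_in_image[OF permutes_inv[OF assms]] by auto
  note inverses = permutes_inverses[OF assms]
  show "\<forall>xs\<in>list_Pi n A. map (\<lambda>i. map (\<lambda>i. xs ! \<sigma> i) [0..<n] ! inv \<sigma> i) [0..<n] = xs"
    using \<sigma>' inverses by (auto simp: list_Pi_def intro!: nth_equalityI)
  show "\<forall>xs\<in>list_Pi n (A \<circ> \<sigma>). map (\<lambda>i. map (\<lambda>i. xs ! inv \<sigma> i) [0..<n] ! \<sigma> i) [0..<n] = xs"
    using \<sigma> inverses by (auto simp: list_Pi_def intro!: nth_equalityI)
  show "(\<lambda>xs. map (\<lambda>i. xs ! \<sigma> i) [0..<n]) ` list_Pi n A \<subseteq> list_Pi n (A \<circ> \<sigma>)"
    using \<sigma> by (auto simp: list_Pi_def)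
  show "(\<lambda>xs. map (\<lambda>i. xs ! inv \<sigma> i) [0..<n]) ` list_Pi n (A \<circ> \<sigma>) \<subseteq> list_Pi n A"
    using \<sigma>' inverses by (auto simp: list_Pi_def) (metis \<sigma>')
qed

definition bijections :: "'a set \<Rightarrow> 'b set \<Rightarrow> ('a \<Rightarrow> 'b) set" where
  "bijections A B = {f \<in> A \<rightarrow>\<^sub>E B. bij_betw f A B}"

lemma bijections_iff: "f \<in> bijections A B \<longleftrightarrow> bij_betw f A B \<and> f \<in> extensional A"
  by (auto simp: bijections_def PiE_def dest: bij_betw_imp_funcset)

lemma finite_bijections: "finite A \<Longrightarrow> finite B \<Longrightarrow> finite (bijections A B)"
  unfolding bijections_def by (rule finite_subset[OF _ finite_PiE[of A "\<lambda>_. B"]]) auto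

lemma card_bijections:
  assumes "finite A" "finite B" "card A = card B"
  shows "card (bijections A B) = fact (card A)"
proof -
  obtain s where s: "bij_betw s A B"
    using finite_same_card_bij assms by blast
  let ?t = "inv_into A s"
  have "bij_betw (\<lambda>p. restrict (s \<circ> p) A) {p. p permutes A} (bijections A B)"
  proof (rule bij_betw_byWitness[where f' = "\<lambda>f x. if x \<in> A then ?t (f x) else x"])
    show "\<forall>p\<in>{p. p permutes A}. (\<lambda>x. if x \<in> A then ?t (restrict (s \<circ> p) A x) else x) = p"
      using s by (auto simp: permutes_not_in permutes_in_image bij_betw_inv_into_left)
    show "\<forall>f\<in>bijections A B. restrict (s \<circ> (\<lambda>x. if x \<in> A then ?t (f x) else x)) A = f"
      using s by (auto simp: bijections_iff extensional_def bij_betw_inv_into_right[OF s]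
          bij_betwE intro!: ext)
    show "(\<lambda>p. restrict (s \<circ> p) A) ` {p. p permutes A} \<subseteq> bijections A B"
      using s by (auto simp: bijections_iff permutes_imp_bij bij_betw_trans
          intro: bij_betw_cong[THEN iffD1, OF _ bij_betw_trans[OF permutes_imp_bij s]])
    show "(\<lambda>f x. if x \<in> A then ?t (f x) else x) ` bijections A B \<subseteq> {p. p permutes A}"
    proof safe
      fix f assume "f \<in> bijections A B"
      then have "bij_betw (?t \<circ> f) A A"
        using s by (auto simp: bijections_iff intro: bij_betw_trans bij_betw_inv_into)
      then show "(\<lambda>x. if x \<in> A then ?t (f x) else x) permutes A"
        by (intro bij_imp_permutes) (auto intro: bij_betw_cong[THEN iffD1, rotated])
    qed
  qed
  then show ?thesis
    using bij_betw_same_card card_permutations[OF refl assms(1)] by fastforce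
qed

section \<open>Ordered factorizations and Dirichlet powers\<close>

definition factorizations :: "nat \<Rightarrow> nat \<Rightarrow> nat list set" where
  "factorizations n k = {ds. length ds = n \<and> prod_list ds = k}"

lemma finite_factorizations:
  assumes "k > 0"
  shows "finite (factorizations n k)"
proof (rule finite_subset)
  show "factorizations n k \<subseteq> {ds. set ds \<subseteq> {..k} \<and> length ds = n}"
    using assms by (auto simp: factorizations_def dest!: prod_list_dvd intro: dvd_imp_le)
qed (simp add: finite_lists_length_eq)

lemma factorizations_Suc:
  assumes "k > 0"
  shows "factorizations (Suc n) k
    = (\<lambda>(d, ds). d # ds) ` (SIGMA d:{d. d dvd k}. factorizations n (k div d))"
proof (intro set_eqI iffI)
  fix xs assume "xs \<in> factorizations (Suc n) k"
  then obtain d ds where "xs = d # ds" "length ds = n" "k = d * prod_list ds"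
    by (auto simp: factorizations_def length_Suc_conv)
  then show "xs \<in> (\<lambda>(d, ds). d # ds) ` (SIGMA d:{d. d dvd k}. factorizations n (k div d))"
    using assms by (auto simp: factorizations_def)
qed (auto simp: factorizations_def elim!: dvdE)

lemma dpow_eq_sum_factorizations:
  assumes "k > 0"
  shows "dpow f n k = (\<Sum>ds\<in>factorizations n k. prod_list (map f ds))"
  using assms
proof (induction n arbitrary: k)
  case 0
  have "factorizations 0 k = (if k = 1 then {[]} else {})"
    by (auto simp: factorizations_def)
  then show ?case
    by (simp add: dunit_def)
next
  case (Suc n)
  have quotients: "k div d > 0" if "d dvd k" for d
    using Suc.prems that by (auto elim: dvdE)
  have "dpow f (Suc n) k = (\<Sum>d | d dvd k. f d * dpow f n (k div d))"
    using Suc.prems by (simp add: dconv_def)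
  also have "\<dots> = (\<Sum>d | d dvd k. \<Sum>ds\<in>factorizations n (k div d). prod_list (map f (d # ds)))"
    using Suc.IH quotients by (simp add: sum_distrib_left)
  also have "\<dots> = (\<Sum>(d, ds)\<in>(SIGMA d:{d. d dvd k}. factorizations n (k div d)).
      prod_list (map f (d # ds)))"
    using Suc.prems quotients by (intro sum.Sigma) (auto intro: finite_factorizations)
  also have "\<dots> = (\<Sum>ds\<in>factorizations (Suc n) k. prod_list (map f ds))"
    unfolding factorizations_Suc[OF Suc.prems]
    by (subst sum.reindex) (auto simp: inj_on_def case_prod_unfold)
  finally show ?case .
qed

lemma prod_list_ge_power:
  fixes xs :: "'a :: linordered_semidom list"
  assumes "0 \<le> a" and "\<And>x. x \<in> set xs \<Longrightarrow> a \<le> x"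
  shows "a ^ length xs \<le> prod_list xs"
  using assms
proof (induction xs)
  case (Cons x xs)
  then have "a \<le> x" "0 \<le> x" "a ^ length xs \<le> prod_list xs"
    by (auto intro: order_trans)
  then show ?case
    using Cons.prems(1) by (simp add: mult_mono)
qed simp

lemma one_in_factorization:
  assumes "ds \<in> factorizations n k" and "0 < k" and "k < n"
  shows "1 \<in> set ds"
proof (rule ccontr)
  assume "1 \<notin> set ds"
  moreover have "0 \<notin> set ds"
    using assms(1,2) prod_list_zero_iff[of ds] by (auto simp: factorizations_def)
  ultimately have "\<forall>x\<in>set ds. 2 \<le> x"
    by (metis One_nat_def less_2_cases not_less)
  then have "2 ^ n \<le> k"
    using assms(1) prod_list_ge_power[of 2 ds] by (simp add: factorizations_def)
  with assms(3) show False
    using less_exp[of n] by linarith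
qed

lemma dpow_at_0: "dpow f n 0 = 0"
  by (cases n) (simp_all add: dunit_def dconv_def)

lemma dpow_eq_0_if_less:
  assumes "f 1 = 0" and "k < n"
  shows "dpow f n k = 0"
proof (cases "k = 0")
  case False
  then have "prod_list (map f ds) = 0" if "ds \<in> factorizations n k" for ds
    using one_in_factorization[OF that _ assms(2)] assms(1)
    by (auto simp: prod_list_zero_iff)
  then show ?thesis
    using False by (simp add: dpow_eq_sum_factorizations)
qed (simp add: dpow_at_0)

lemma dexp_eq_sum:
  assumes "f 1 = 0"
  shows "dexp f k = (\<Sum>n\<le>k. dpow f n k / fact n)"
  unfolding dexp_def
  by (rule suminf_finite) (auto simp: not_le dpow_eq_0_if_less[where f = f, OF assms])

definition kernel_on :: "'a set \<Rightarrow> ('a \<Rightarrow> 'b) \<Rightarrow> ('a \<times> 'a) set" where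
  "kernel_on S f = {(s, t). s \<in> S \<and> t \<in> S \<and> f s = f t}"

definition class_value :: "('a \<Rightarrow> 'b) \<Rightarrow> 'a set \<Rightarrow> 'b" where
  "class_value f C = f (SOME s. s \<in> C)"

lemma equiv_kernel_on: "equiv S (kernel_on S f)"
  by (auto simp: equiv_def refl_on_def sym_def trans_def kernel_on_def)

lemma kernel_on_class: "s \<in> S \<Longrightarrow> kernel_on S f `` {s} = {t \<in> S. f t = f s}"
  by (auto simp: kernel_on_def)

lemma class_value_class: "s \<in> S \<Longrightarrow> class_value f (kernel_on S f `` {s}) = f s"
  unfolding class_value_def kernel_on_class
  by (rule someI2[of _ s]) auto

lemma bij_betw_class_value: "bij_betw (class_value f) (S // kernel_on S f) (f ` S)"
proof (rule bij_betw_imageI)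
  show "inj_on (class_value f) (S // kernel_on S f)"
  proof (rule inj_onI)
    fix C D assume "C \<in> S // kernel_on S f" "D \<in> S // kernel_on S f"
      and eq: "class_value f C = class_value f D"
    then obtain s t where "s \<in> S" "t \<in> S"
      and "C = kernel_on S f `` {s}" "D = kernel_on S f `` {t}"
      by (auto elim!: quotientE)
    moreover from this eq have "f s = f t"
      by (simp only: class_value_class)
    ultimately show "C = D"
      by (simp add: kernel_on_class)
  qed
  show "class_value f ` (S // kernel_on S f) = f ` S"
    by (auto elim!: quotientE simp: class_value_class image_iff)
       (metis class_value_class quotientI)
qed

lemma kernel_on_class_map:
  assumes "equiv S r" and "inj_on h (S // r)"
  shows "kernel_on S (\<lambda>s. h (r `` {s})) = r"
proof -
  have "(s, t) \<in> r \<longleftrightarrow> h (r `` {s}) = h (r `` {t})" if "s \<in> S" "t \<in> S" for s t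
    using that eq_equiv_class_iff[OF assms(1)] inj_onD[OF assms(2)] quotientI[of _ S r] by metis
  then show ?thesis
    using equiv_type[OF assms(1)] by (auto simp: kernel_on_def)
qed

section \<open>Cartesian decompositions\<close>

lemma cart_decomp_iff_list_Pi:
  "cart_decomp S \<pi>s \<longleftrightarrow> (\<forall>r\<in>set \<pi>s. equiv S r) \<and>
     bij_betw (\<lambda>s. map (\<lambda>r. r `` {s}) \<pi>s) S (list_Pi (length \<pi>s) (\<lambda>i. S // \<pi>s ! i))"
proof -
  have "list_Pi (length \<pi>s) ((!) (map ((//) S) \<pi>s)) = list_Pi (length \<pi>s) (\<lambda>i. S // \<pi>s ! i)"
    by (rule list_Pi_cong) simp
  then show ?thesis
    by (simp add: cart_decomp_def listset_eq_list_Pi)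
qed

lemma cart_decomp_equiv: "cart_decomp S \<pi>s \<Longrightarrow> i < length \<pi>s \<Longrightarrow> equiv S (\<pi>s ! i)"
  unfolding cart_decomp_def by (meson nth_mem)

lemma bij_betw_cart_decomp:
  "cart_decomp S \<pi>s \<Longrightarrow>
     bij_betw (\<lambda>s. map (\<lambda>r. r `` {s}) \<pi>s) S (list_Pi (length \<pi>s) (\<lambda>i. S // \<pi>s ! i))"
  by (simp add: cart_decomp_iff_list_Pi)

lemma card_cart_decomp:
  "cart_decomp S \<pi>s \<Longrightarrow> card S = (\<Prod>i<length \<pi>s. card (S // \<pi>s ! i))"
  using bij_betw_same_card[OF bij_betw_cart_decomp] by (simp add: card_list_Pi)

lemma finite_cart_decomp_quotient:
  "finite S \<Longrightarrow> cart_decomp S \<pi>s \<Longrightarrow> i < length \<pi>s \<Longrightarrow> finite (S // \<pi>s ! i)"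
  by (metis cart_decomp_equiv equiv_type finite_quotient)

definition cart_decomps :: "nat \<Rightarrow> V set \<Rightarrow> (V \<times> V) set list set" where
  "cart_decomps n S = {\<pi>s. length \<pi>s = n \<and> cart_decomp S \<pi>s}"

lemma finite_cart_decomps:
  assumes "finite S"
  shows "finite (cart_decomps n S)"
proof (rule finite_subset)
  show "cart_decomps n S \<subseteq> {\<pi>s. set \<pi>s \<subseteq> Pow (S \<times> S) \<and> length \<pi>s = n}"
    by (auto simp: cart_decomps_def cart_decomp_def dest!: equiv_type)
  show "finite {\<pi>s. set \<pi>s \<subseteq> Pow (S \<times> S) \<and> length \<pi>s = n}"
    using assms by (simp add: finite_lists_length_eq)
qed

lemma cart_decomp_permute:
  assumes "cart_decomp S \<pi>s" and "\<sigma> permutes {..<length \<pi>s}"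
  shows "cart_decomp S (map (\<lambda>i. \<pi>s ! \<sigma> i) [0..<length \<pi>s])"
proof -
  let ?n = "length \<pi>s" and ?perm = "\<lambda>xs. map (\<lambda>i. xs ! \<sigma> i) [0..<length \<pi>s]"
  have \<sigma>: "\<sigma> i < ?n" if "i < ?n" for i
    using permutes_in_image[OF assms(2)] that by simp
  have "bij_betw (?perm \<circ> (\<lambda>s. map (\<lambda>r. r `` {s}) \<pi>s)) S
      (list_Pi ?n ((\<lambda>i. S // \<pi>s ! i) \<circ> \<sigma>))"
    by (rule bij_betw_trans[OF bij_betw_cart_decomp[OF assms(1)] bij_betw_list_Pi_permute[OF assms(2)]])
  moreover have "?perm \<circ> (\<lambda>s. map (\<lambda>r. r `` {s}) \<pi>s) = (\<lambda>s. map (\<lambda>r. r `` {s}) (?perm \<pi>s))"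
    using \<sigma> by (auto simp: comp_def)
  moreover have "list_Pi ?n ((\<lambda>i. S // \<pi>s ! i) \<circ> \<sigma>) = list_Pi ?n (\<lambda>i. S // ?perm \<pi>s ! i)"
    by (rule list_Pi_cong) simp
  moreover have "\<forall>r\<in>set (?perm \<pi>s). equiv S r"
    using \<sigma> cart_decomp_equiv[OF assms(1)] by auto
  ultimately show ?thesis
    by (simp only: cart_decomp_iff_list_Pi length_map length_upt) simp
qed

text \<open>The classes of the two copies of a repeated factor can be prescribed independently,
  so they must coincide.\<close>
lemma cart_decomp_repeated_factor:
  assumes "cart_decomp S \<pi>s" and "i < length \<pi>s" "j < length \<pi>s" "i \<noteq> j" "\<pi>s ! i = \<pi>s ! j"
    and C: "C \<in> S // \<pi>s ! i" and D: "D \<in> S // \<pi>s ! i"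
  shows "C = D"
proof -
  obtain s0 where "s0 \<in> S"
    using C by (auto elim: quotientE)
  let ?l = "(map (\<lambda>r. r `` {s0}) \<pi>s)[i := C, j := D]"
  have "?l \<in> list_Pi (length \<pi>s) (\<lambda>i. S // \<pi>s ! i)"
    using assms(2-5) C D \<open>s0 \<in> S\<close> by (auto simp: list_Pi_def nth_list_update quotientI)
  then have "?l \<in> (\<lambda>s. map (\<lambda>r. r `` {s}) \<pi>s) ` S"
    using bij_betw_imp_surj_on[OF bij_betw_cart_decomp[OF assms(1)]] by simp
  then obtain s where s: "map (\<lambda>r. r `` {s}) \<pi>s = ?l"
    by (elim imageE) metis
  have "\<pi>s ! i `` {s} = ?l ! i" "\<pi>s ! j `` {s} = ?l ! j"
    using assms(2,3) by (simp_all flip: s)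
  then show "C = D"
    using assms(2-5) by (simp add: nth_list_update)
qed

lemma species_transport_closed:
  "species F Fm \<Longrightarrow> finite A \<Longrightarrow> bij_betw \<sigma> A B \<Longrightarrow> x \<in> F A \<Longrightarrow> Fm \<sigma> A x \<in> F B"
  unfolding species_def by meson

lemma species_transport_id: "species F Fm \<Longrightarrow> finite A \<Longrightarrow> x \<in> F A \<Longrightarrow> Fm id A x = x"
  unfolding species_def by meson

lemma species_transport_comp:
  "species F Fm \<Longrightarrow> finite A \<Longrightarrow> inj_on \<sigma> A \<Longrightarrow> inj_on \<tau> (\<sigma> ` A) \<Longrightarrow> x \<in> F A \<Longrightarrow>
     Fm (\<tau> \<circ> \<sigma>) A x = Fm \<tau> (\<sigma> ` A) (Fm \<sigma> A x)"
  unfolding species_def by meson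

lemma species_transport_cong:
  "species F Fm \<Longrightarrow> finite A \<Longrightarrow> (\<And>a. a \<in> A \<Longrightarrow> \<sigma> a = \<tau> a) \<Longrightarrow> x \<in> F A \<Longrightarrow>
     Fm \<sigma> A x = Fm \<tau> A x"
  unfolding species_def by meson

lemma species_transport_inverse:
  assumes sp: "species F Fm" and "finite A" and \<sigma>: "bij_betw \<sigma> A B" and \<tau>: "bij_betw \<tau> B A"
    and inverse: "\<And>a. a \<in> A \<Longrightarrow> \<tau> (\<sigma> a) = a" and x: "x \<in> F A"
  shows "Fm \<tau> B (Fm \<sigma> A x) = x"
proof -
  have "\<sigma> ` A = B"
    using \<sigma> by (simp add: bij_betw_def)
  then have "Fm \<tau> B (Fm \<sigma> A x) = Fm (\<tau> \<circ> \<sigma>) A x"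
    using species_transport_comp[OF sp \<open>finite A\<close> bij_betw_imp_inj_on[OF \<sigma>] _ x]
      bij_betw_imp_inj_on[OF \<tau>] by simp
  also have "\<dots> = Fm id A x"
    by (rule species_transport_cong[OF sp \<open>finite A\<close> _ x]) (simp add: inverse)
  also have "\<dots> = x"
    using species_transport_id[OF sp \<open>finite A\<close> x] .
  finally show ?thesis .
qed

lemma species_transport_bij:
  assumes sp: "species F Fm" and "finite A" and \<sigma>: "bij_betw \<sigma> A B"
  shows "bij_betw (Fm \<sigma> A) (F A) (F B)"
proof (rule bij_betw_byWitness[where f' = "Fm (inv_into A \<sigma>) B"])
  have \<tau>: "bij_betw (inv_into A \<sigma>) B A"
    using bij_betw_inv_into[OF \<sigma>] .
  have "finite B"
    using \<sigma> \<open>finite A\<close> bij_betw_finite by blast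
  show "\<forall>x\<in>F A. Fm (inv_into A \<sigma>) B (Fm \<sigma> A x) = x"
    using species_transport_inverse[OF sp \<open>finite A\<close> \<sigma> \<tau> bij_betw_inv_into_left[OF \<sigma>]] by simp
  show "\<forall>y\<in>F B. Fm \<sigma> A (Fm (inv_into A \<sigma>) B y) = y"
    using species_transport_inverse[OF sp \<open>finite B\<close> \<tau> \<sigma> bij_betw_inv_into_right[OF \<sigma>]] by simp
  show "Fm \<sigma> A ` F A \<subseteq> F B" "Fm (inv_into A \<sigma>) B ` F B \<subseteq> F A"
    using species_transport_closed[OF sp \<open>finite A\<close> \<sigma>] species_transport_closed[OF sp \<open>finite B\<close> \<tau>]
    by auto
qed

lemma card_species_eq:
  assumes "species F Fm" "finite A" "finite B" "card A = card B"
  shows "card (F A) = card (F B)"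
proof -
  obtain \<sigma> where "bij_betw \<sigma> A B"
    using finite_same_card_bij[OF assms(2-4)] by blast
  then show ?thesis
    by (rule bij_betw_same_card[OF species_transport_bij[OF assms(1,2)]])
qed

lemma card_dirichlet_species:
  assumes "dirichlet_species F Fm" and "finite A"
  shows "real (card (F A)) = fact (card A) * dseries F (card A)"
proof (cases "A = {}")
  case False
  have "card (Atom ` {..<card A}) = card A"
    by (simp add: card_image inj_on_def)
  then have "card (F A) = card (F (Atom ` {..<card A}))"
    using assms card_species_eq[of F Fm A "Atom ` {..<card A}"] by (simp add: dirichlet_species_def)
  then show ?thesis
    using False assms(2) by (simp add: dseries_def)
qed (use assms(1) in \<open>simp add: dirichlet_species_def dseries_def\<close>)

lemma card_lab_image: "(\<And>C. C \<in> Q \<Longrightarrow> finite C) \<Longrightarrow> card (lab ` Q) = card Q"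
  by (intro card_image inj_onI) (metis lab_def Abs_fset_inverse mem_Collect_eq V.inject(2))

section \<open>Counting cartesian decompositions\<close>

definition class_numberings :: "'a set \<Rightarrow> ('a \<times> 'a) set list \<Rightarrow> ('a set \<Rightarrow> nat) list set" where
  "class_numberings S \<pi>s =
     list_Pi (length \<pi>s) (\<lambda>i. bijections (S // \<pi>s ! i) {..<card (S // \<pi>s ! i)})"

definition box_bijections :: "'a set \<Rightarrow> nat list \<Rightarrow> ('a \<Rightarrow> nat list) set" where
  "box_bijections S ds = bijections S (list_Pi (length ds) (\<lambda>i. {..<ds ! i}))"

definition encode_decomp ::
    "'a set \<Rightarrow> ('a \<times> 'a) set list \<times> ('a set \<Rightarrow> nat) list \<Rightarrow> nat list \<times> ('a \<Rightarrow> nat list)" where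
  "encode_decomp S = (\<lambda>(\<pi>s, hs). (map (\<lambda>r. card (S // r)) \<pi>s,
     \<lambda>s\<in>S. map (\<lambda>i. (hs ! i) (\<pi>s ! i `` {s})) [0..<length \<pi>s]))"

definition decode_decomp ::
    "'a set \<Rightarrow> nat list \<times> ('a \<Rightarrow> nat list) \<Rightarrow> ('a \<times> 'a) set list \<times> ('a set \<Rightarrow> nat) list" where
  "decode_decomp S = (\<lambda>(ds, g).
     (map (\<lambda>i. kernel_on S (\<lambda>s. g s ! i)) [0..<length ds],
      map (\<lambda>i. restrict (class_value (\<lambda>s. g s ! i)) (S // kernel_on S (\<lambda>s. g s ! i)))
        [0..<length ds]))"

lemma finite_class_numberings:
  "finite S \<Longrightarrow> \<pi>s \<in> cart_decomps n S \<Longrightarrow> finite (class_numberings S \<pi>s)"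
  unfolding class_numberings_def cart_decomps_def
  by (auto intro!: finite_list_Pi finite_bijections finite_cart_decomp_quotient)

lemma card_class_numberings:
  "finite S \<Longrightarrow> \<pi>s \<in> cart_decomps n S \<Longrightarrow>
     card (class_numberings S \<pi>s) = (\<Prod>i<n. fact (card (S // \<pi>s ! i)))"
  unfolding class_numberings_def cart_decomps_def card_list_Pi
  by (auto intro!: prod.cong card_bijections finite_cart_decomp_quotient)

lemma finite_box_bijections: "finite S \<Longrightarrow> finite (box_bijections S ds)"
  unfolding box_bijections_def by (auto intro!: finite_bijections finite_list_Pi)

lemma card_box_bijections:
  assumes "finite S" and "ds \<in> factorizations n (card S)"
  shows "card (box_bijections S ds) = fact (card S)"
proof -
  have "card (list_Pi (length ds) (\<lambda>i. {..<ds ! i})) = card S"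
    using assms(2) by (auto simp: card_list_Pi factorizations_def prod.list_conv_set_nth atLeast0LessThan)
  then show ?thesis
    unfolding box_bijections_def using assms(1) by (intro card_bijections finite_list_Pi) auto
qed

lemma encode_decomp_mem:
  assumes "finite S" and \<pi>s: "\<pi>s \<in> cart_decomps n S" and hs: "hs \<in> class_numberings S \<pi>s"
  shows "encode_decomp S (\<pi>s, hs) \<in> Sigma (factorizations n (card S)) (box_bijections S)"
proof -
  have len: "length \<pi>s = n" and cd: "cart_decomp S \<pi>s"
    using \<pi>s by (auto simp: cart_decomps_def)
  let ?ds = "map (\<lambda>r. card (S // r)) \<pi>s"
  have "prod_list ?ds = card S"
    using card_cart_decomp[OF cd] by (simp add: prod.list_conv_set_nth atLeast0LessThan)
  then have ds: "?ds \<in> factorizations n (card S)"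
    by (simp add: factorizations_def len)
  have "bij_betw (hs ! i) (S // \<pi>s ! i) {..<?ds ! i}" if "i < n" for i
    using hs that len by (simp add: class_numberings_def list_Pi_def bijections_iff)
  from bij_betw_trans[OF bij_betw_cart_decomp[OF cd, unfolded len] bij_betw_list_Pi_map[OF this]]
  have "bij_betw (\<lambda>s\<in>S. map (\<lambda>i. (hs ! i) (\<pi>s ! i `` {s})) [0..<n]) S
      (list_Pi n (\<lambda>i. {..<?ds ! i}))"
    by (rule bij_betw_cong[THEN iffD1, rotated]) (auto simp: len intro!: map_cong)
  then show ?thesis
    using ds len by (simp add: encode_decomp_def box_bijections_def bijections_iff)
qed

lemma box_bijection_coordinate:
  assumes "finite S" "S \<noteq> {}" and ds: "ds \<in> factorizations n (card S)"
    and g: "g \<in> box_bijections S ds" and "i < n"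
  shows "bij_betw (class_value (\<lambda>s. g s ! i)) (S // kernel_on S (\<lambda>s. g s ! i)) {..<ds ! i}"
proof -
  have "0 \<notin> set ds"
    using ds assms(1,2) prod_list_zero_iff[of ds] by (auto simp: factorizations_def)
  have nonempty: "{..<ds ! j} \<noteq> {}" if "j < n" for j
  proof -
    have "ds ! j \<in> set ds"
      using ds that by (simp add: factorizations_def)
    with \<open>0 \<notin> set ds\<close> have "ds ! j \<noteq> 0"
      by metis
    then have "0 \<in> {..<ds ! j}"
      by simp
    then show ?thesis
      by blast
  qed
  have "g ` S = list_Pi n (\<lambda>i. {..<ds ! i})"
    using g ds by (simp add: box_bijections_def bijections_iff bij_betw_def factorizations_def)
  then have "(\<lambda>s. g s ! i) ` S = {..<ds ! i}"
    using nth_image_list_Pi[of i n "\<lambda>j. {..<ds ! j}", OF \<open>i < n\<close> nonempty]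
    by (simp add: image_image[of "\<lambda>xs. xs ! i" g, symmetric])
  then show ?thesis
    using bij_betw_class_value[of "\<lambda>s. g s ! i" S] by simp
qed

lemma decode_decomp_mem:
  assumes S: "finite S" "S \<noteq> {}" and ds: "ds \<in> factorizations n (card S)"
    and g: "g \<in> box_bijections S ds"
  shows "decode_decomp S (ds, g) \<in> Sigma (cart_decomps n S) (class_numberings S)"
proof -
  define \<kappa> where "\<kappa> i = kernel_on S (\<lambda>s. g s ! i)" for i
  define c where "c i = class_value (\<lambda>s. g s ! i)" for i
  have len: "length ds = n"
    using ds by (simp add: factorizations_def)
  have c: "bij_betw (c i) (S // \<kappa> i) {..<ds ! i}" if "i < n" for i
    unfolding c_def \<kappa>_def using box_bijection_coordinate[OF S ds g that] .
  have g_bij: "bij_betw g S (list_Pi n (\<lambda>i. {..<ds ! i}))"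
    using g len by (simp add: box_bijections_def bijections_iff)
  have "g s = map (\<lambda>i. c i (\<kappa> i `` {s})) [0..<n]" if "s \<in> S" for s
    using that bij_betwE[OF g_bij] by (auto simp: c_def \<kappa>_def class_value_class list_Pi_def
        intro!: nth_equalityI)
  then have "bij_betw ((\<lambda>l. map (\<lambda>i. c i (l ! i)) [0..<n]) \<circ> (\<lambda>s. map (\<lambda>i. \<kappa> i `` {s}) [0..<n]))
      S (list_Pi n (\<lambda>i. {..<ds ! i}))"
    by (intro bij_betw_cong[THEN iffD1, OF _ g_bij]) simp
  then have "bij_betw (\<lambda>s. map (\<lambda>i. \<kappa> i `` {s}) [0..<n]) S (list_Pi n (\<lambda>i. S // \<kappa> i))"
    by (subst bij_betw_comp_iff2[OF bij_betw_list_Pi_map[OF c]])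
       (auto simp: list_Pi_def quotientI)
  moreover have "list_Pi n (\<lambda>i. S // \<kappa> i)
      = list_Pi (length (map \<kappa> [0..<n])) (\<lambda>i. S // map \<kappa> [0..<n] ! i)"
    unfolding length_map length_upt diff_zero by (rule list_Pi_cong) simp
  ultimately have "cart_decomp S (map \<kappa> [0..<n])"
    by (simp add: cart_decomp_iff_list_Pi \<kappa>_def equiv_kernel_on comp_def)
  moreover have "restrict (c i) (S // \<kappa> i) \<in> bijections (S // \<kappa> i) {..<card (S // \<kappa> i)}"
    if "i < n" for i
    using c[OF that] bij_betw_same_card[OF c[OF that]]
    by (simp add: bijections_iff bij_betw_cong[of _ "restrict (c i) (S // \<kappa> i)"])
  ultimately show ?thesis
    by (simp add: decode_decomp_def cart_decomps_def class_numberings_def list_Pi_def len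
        flip: c_def \<kappa>_def)
qed

lemma decode_encode_decomp:
  assumes \<pi>s: "\<pi>s \<in> cart_decomps n S" and hs: "hs \<in> class_numberings S \<pi>s"
  shows "decode_decomp S (encode_decomp S (\<pi>s, hs)) = (\<pi>s, hs)"
proof -
  have len: "length \<pi>s = n" "length hs = n" and cd: "cart_decomp S \<pi>s"
    using \<pi>s hs by (auto simp: cart_decomps_def class_numberings_def list_Pi_def)
  have h: "hs ! i \<in> bijections (S // \<pi>s ! i) {..<card (S // \<pi>s ! i)}" if "i < n" for i
    using hs that len by (simp add: class_numberings_def list_Pi_def)
  define g where "g = (\<lambda>s\<in>S. map (\<lambda>i. (hs ! i) (\<pi>s ! i `` {s})) [0..<n])"
  have kernel: "kernel_on S (\<lambda>s. g s ! i) = \<pi>s ! i" if "i < n" for i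
  proof -
    have "kernel_on S (\<lambda>s. g s ! i) = kernel_on S (\<lambda>s. (hs ! i) (\<pi>s ! i `` {s}))"
      using that by (auto simp: kernel_on_def g_def)
    also have "\<dots> = \<pi>s ! i"
      using cart_decomp_equiv[OF cd] h[OF that] that len
      by (intro kernel_on_class_map) (auto simp: bijections_iff bij_betw_def)
    finally show ?thesis .
  qed
  have "restrict (class_value (\<lambda>s. g s ! i)) (S // \<pi>s ! i) = hs ! i" if i: "i < n" for i
  proof
    fix C
    show "restrict (class_value (\<lambda>s. g s ! i)) (S // \<pi>s ! i) C = (hs ! i) C"
    proof (cases "C \<in> S // \<pi>s ! i")
      case True
      then obtain s where "s \<in> S" and C: "C = kernel_on S (\<lambda>s. g s ! i) `` {s}"
        using kernel[OF i] by (auto elim: quotientE)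
      then have "class_value (\<lambda>s. g s ! i) C = g s ! i"
        by (simp only: class_value_class)
      then show ?thesis
        using True \<open>s \<in> S\<close> C kernel[OF i] i by (simp add: g_def)
    next
      case False
      then show ?thesis
        using h[OF i] by (simp add: bijections_iff extensional_def)
    qed
  qed
  with kernel show ?thesis
    by (auto simp: decode_decomp_def encode_decomp_def len intro!: nth_equalityI simp flip: g_def)
qed

lemma encode_decode_decomp:
  assumes S: "finite S" "S \<noteq> {}" and ds: "ds \<in> factorizations n (card S)"
    and g: "g \<in> box_bijections S ds"
  shows "encode_decomp S (decode_decomp S (ds, g)) = (ds, g)"
proof -
  have len: "length ds = n"
    using ds by (simp add: factorizations_def)
  have g_bij: "bij_betw g S (list_Pi n (\<lambda>i. {..<ds ! i}))" and "g \<in> extensional S"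
    using g len by (simp_all add: box_bijections_def bijections_iff)
  have "card (S // kernel_on S (\<lambda>s. g s ! i)) = ds ! i" if "i < n" for i
    using bij_betw_same_card[OF box_bijection_coordinate[OF S ds g that]] by simp
  then show ?thesis
    using bij_betwE[OF g_bij] \<open>g \<in> extensional S\<close>
    by (auto simp: decode_decomp_def encode_decomp_def len class_value_class list_Pi_def
        extensional_def quotientI intro!: ext nth_equalityI)
qed

lemma bij_betw_encode_decomp:
  assumes "finite S" "S \<noteq> {}"
  shows "bij_betw (encode_decomp S) (Sigma (cart_decomps n S) (class_numberings S))
           (Sigma (factorizations n (card S)) (box_bijections S))"
proof (rule bij_betw_byWitness[where f' = "decode_decomp S"])
  show "\<forall>x\<in>Sigma (cart_decomps n S) (class_numberings S). decode_decomp S (encode_decomp S x) = x"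
    using decode_encode_decomp by blast
  show "\<forall>y\<in>Sigma (factorizations n (card S)) (box_bijections S). encode_decomp S (decode_decomp S y) = y"
    using encode_decode_decomp[OF assms] by blast
  show "encode_decomp S ` Sigma (cart_decomps n S) (class_numberings S)
      \<subseteq> Sigma (factorizations n (card S)) (box_bijections S)"
    using encode_decomp_mem[OF assms(1)] by blast
  show "decode_decomp S ` Sigma (factorizations n (card S)) (box_bijections S)
      \<subseteq> Sigma (cart_decomps n S) (class_numberings S)"
    using decode_decomp_mem[OF assms] by blast
qed

lemma sum_cart_decomps_eq_dpow:
  fixes f :: "nat \<Rightarrow> real"
  assumes S: "finite S" "S \<noteq> {}"
  shows "(\<Sum>\<pi>s\<in>cart_decomps n S. \<Prod>i<n. fact (card (S // \<pi>s ! i)) * f (card (S // \<pi>s ! i)))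
       = fact (card S) * dpow f n (card S)"
proof -
  define w where "w \<pi>s = (\<Prod>r\<leftarrow>\<pi>s. f (card (S // r)))" for \<pi>s
  have "card S > 0"
    using S by auto
  have "(\<Sum>\<pi>s\<in>cart_decomps n S. \<Prod>i<n. fact (card (S // \<pi>s ! i)) * f (card (S // \<pi>s ! i)))
      = (\<Sum>\<pi>s\<in>cart_decomps n S. \<Sum>hs\<in>class_numberings S \<pi>s. w \<pi>s)"
    using S(1) by (intro sum.cong) (auto simp: card_class_numberings prod.distrib w_def
        prod.list_conv_set_nth atLeast0LessThan cart_decomps_def)
  also have "\<dots> = (\<Sum>(\<pi>s, hs)\<in>Sigma (cart_decomps n S) (class_numberings S). w \<pi>s)"
    using S(1) by (intro sum.Sigma) (auto intro: finite_cart_decomps finite_class_numberings)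
  also have "\<dots> = (\<Sum>x\<in>Sigma (cart_decomps n S) (class_numberings S).
      (\<lambda>(ds, g). prod_list (map f ds)) (encode_decomp S x))"
    by (intro sum.cong) (auto simp: encode_decomp_def w_def comp_def)
  also have "\<dots> = (\<Sum>(ds, g)\<in>Sigma (factorizations n (card S)) (box_bijections S). prod_list (map f ds))"
    by (rule sum.reindex_bij_betw[OF bij_betw_encode_decomp[OF S]])
  also have "\<dots> = (\<Sum>ds\<in>factorizations n (card S). \<Sum>g\<in>box_bijections S ds. prod_list (map f ds))"
    using S(1) \<open>card S > 0\<close>
    by (intro sum.Sigma[symmetric]) (auto intro: finite_factorizations finite_box_bijections)
  also have "\<dots> = fact (card S) * (\<Sum>ds\<in>factorizations n (card S). prod_list (map f ds))"
    using S(1) by (simp add: card_box_bijections sum_distrib_left)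
  also have "\<dots> = fact (card S) * dpow f n (card S)"
    using \<open>card S > 0\<close> by (simp add: dpow_eq_sum_factorizations)
  finally show ?thesis .
qed

lemma dpowD_eq_Sigma:
  "n \<noteq> 0 \<Longrightarrow> dpowD F n S = Sigma (cart_decomps n S) (\<lambda>\<pi>s. list_Pi n (\<lambda>i. F (lab ` (S // \<pi>s ! i))))"
  by (auto simp: dpowD_def cart_decomps_def list_Pi_def)

lemma finite_dpowD:
  assumes "tame F" "finite S"
  shows "finite (dpowD F n S)"
proof (cases "n = 0")
  case False
  then show ?thesis
    unfolding dpowD_eq_Sigma[OF False] using assms
    by (intro finite_SigmaI finite_cart_decomps finite_list_Pi)
       (auto simp: tame_def cart_decomps_def finite_cart_decomp_quotient)
qed (simp add: dpowD_def)

lemma card_dirichlet_species_quotient: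
  assumes "dirichlet_species F Fm" "finite S" "equiv S r"
  shows "real (card (F (lab ` (S // r)))) = fact (card (S // r)) * dseries F (card (S // r))"
proof -
  have "finite (S // r)" and classes: "\<And>C. C \<in> S // r \<Longrightarrow> finite C"
    using assms(2,3) equiv_type finite_quotient in_quotient_imp_subset finite_subset by metis+
  then show ?thesis
    using card_dirichlet_species[OF assms(1), of "lab ` (S // r)"] card_lab_image[OF classes] by simp
qed

lemma card_dpowD:
  assumes ds: "dirichlet_species F Fm" and "tame F" "finite S"
  shows "real (card (dpowD F n S)) = fact (card S) * dpow (dseries F) n (card S)"
proof (cases "n = 0")
  case True
  then show ?thesis
    by (simp add: dpowD_def dunit_def)
next
  case n: False
  show ?thesis
  proof (cases "S = {}")
    case True
    have "list_Pi n (\<lambda>i. F (lab ` ({} // \<pi>s ! i))) = {}" for \<pi>s :: "(V \<times> V) set list"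
      using ds n by (auto simp: list_Pi_def dirichlet_species_def)
    then show ?thesis
      using True n by (simp add: dpowD_eq_Sigma dpow_at_0)
  next
    case False
    have fibres: "\<forall>\<pi>s\<in>cart_decomps n S. finite (list_Pi n (\<lambda>i. F (lab ` (S // \<pi>s ! i))))"
      using assms(2,3)
      by (auto intro!: finite_list_Pi simp: tame_def cart_decomps_def finite_cart_decomp_quotient)
    have "real (card (dpowD F n S))
        = (\<Sum>\<pi>s\<in>cart_decomps n S. \<Prod>i<n. real (card (F (lab ` (S // \<pi>s ! i)))))"
      unfolding dpowD_eq_Sigma[OF n] card_SigmaI[OF finite_cart_decomps[OF \<open>finite S\<close>] fibres]
      by (simp add: card_list_Pi)
    also have "\<dots> = (\<Sum>\<pi>s\<in>cart_decomps n S.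
        \<Prod>i<n. fact (card (S // \<pi>s ! i)) * dseries F (card (S // \<pi>s ! i)))"
      using card_dirichlet_species_quotient[OF ds \<open>finite S\<close>] cart_decomp_equiv
      by (intro sum.cong prod.cong) (auto simp: cart_decomps_def)
    also have "\<dots> = fact (card S) * dpow (dseries F) n (card S)"
      using sum_cart_decomps_eq_dpow[OF \<open>finite S\<close> False] .
    finally show ?thesis .
  qed
qed

lemma dseries_at_1:
  assumes "\<forall>S. card S = 1 \<longrightarrow> F S = {}"
  shows "dseries F 1 = 0"
proof -
  have "card (Atom ` {..<1}) = 1"
    by (simp add: lessThan_Suc)
  then show ?thesis
    using assms by (simp add: dseries_def)
qed

lemma dpowD_eq_empty_if_less:
  assumes "dirichlet_species F Fm" "tame F" "\<forall>S. card S = 1 \<longrightarrow> F S = {}"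
    and "finite S" "card S < n"
  shows "dpowD F n S = {}"
proof -
  have "dpow (dseries F) n (card S) = 0"
    using dpow_eq_0_if_less[where f = "dseries F", OF dseries_at_1[OF assms(3)] assms(5)] .
  then have "card (dpowD F n S) = 0"
    using card_dpowD[OF assms(1,2,4), of n] by simp
  then show ?thesis
    using finite_dpowD[OF assms(2,4)] by simp
qed

section \<open>The action of the symmetric group\<close>

lemma length_dpowD: "a \<in> dpowD F n S \<Longrightarrow> length (fst a) = n \<and> length (snd a) = n"
  by (cases "n = 0") (auto simp: dpowD_def split: if_splits)

lemma permact_id: "permact id a = a"
  by (simp add: permact_def map_nth)

lemma permact_permact:
  assumes "length (fst a) = n" "length (snd a) = n" "\<And>i. i < n \<Longrightarrow> \<sigma> i < n"
  shows "permact \<sigma> (permact \<tau> a) = permact (\<tau> \<circ> \<sigma>) a"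
  using assms by (auto simp: permact_def intro!: nth_equalityI)

lemma permact_cong:
  assumes "length (fst a) = n" "length (snd a) = n" "\<And>i. i < n \<Longrightarrow> \<sigma> i = \<tau> i"
  shows "permact \<sigma> a = permact \<tau> a"
  using assms by (simp add: permact_def)

lemma inj_on_permact:
  assumes "distinct (fst a)" "length (fst a) = n"
  shows "inj_on (\<lambda>\<sigma>. permact \<sigma> a) {\<sigma>. \<sigma> permutes {..<n}}"
proof (rule inj_onI, rule ext)
  fix \<sigma> \<tau> i
  assume \<sigma>: "\<sigma> \<in> {\<sigma>. \<sigma> permutes {..<n}}" and \<tau>: "\<tau> \<in> {\<sigma>. \<sigma> permutes {..<n}}"
    and eq: "permact \<sigma> a = permact \<tau> a"
  show "\<sigma> i = \<tau> i"
  proof (cases "i < n")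
    case True
    then have "fst a ! \<sigma> i = fst a ! \<tau> i"
      using arg_cong[OF eq, of "\<lambda>p. fst p ! i"] assms(2) by (simp add: permact_def)
    moreover have "\<sigma> i < n" "\<tau> i < n"
      using \<sigma> \<tau> True permutes_in_image by fastforce+
    ultimately show ?thesis
      using assms by (simp add: nth_eq_iff_index_eq)
  qed (use \<sigma> \<tau> in \<open>simp add: permutes_not_in\<close>)
qed

lemma permact_in_dpowD:
  assumes a: "a \<in> dpowD F n S" and \<sigma>: "\<sigma> permutes {..<n}"
  shows "permact \<sigma> a \<in> dpowD F n S"
proof (cases "n = 0")
  case True
  then show ?thesis
    using a by (auto simp: dpowD_def permact_def split: if_splits)
next
  case n: False
  obtain \<pi>s xs where a_eq: "a = (\<pi>s, xs)"
    by (cases a)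
  have \<pi>s: "\<pi>s \<in> cart_decomps n S" and xs: "xs \<in> list_Pi n (\<lambda>i. F (lab ` (S // \<pi>s ! i)))"
    using a a_eq by (auto simp: dpowD_eq_Sigma[OF n])
  let ?\<pi>s' = "map (\<lambda>i. \<pi>s ! \<sigma> i) [0..<n]"
  have "cart_decomp S ?\<pi>s'"
    using cart_decomp_permute[of S \<pi>s \<sigma>] \<pi>s \<sigma> by (simp add: cart_decomps_def)
  moreover have "map (\<lambda>i. xs ! \<sigma> i) [0..<n] \<in> list_Pi n ((\<lambda>i. F (lab ` (S // \<pi>s ! i))) \<circ> \<sigma>)"
    using bij_betw_apply[OF bij_betw_list_Pi_permute[OF \<sigma>] xs] .
  moreover have "list_Pi n ((\<lambda>i. F (lab ` (S // \<pi>s ! i))) \<circ> \<sigma>)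
      = list_Pi n (\<lambda>i. F (lab ` (S // ?\<pi>s' ! i)))"
    by (rule list_Pi_cong) simp
  ultimately show ?thesis
    using a_eq length_dpowD[OF a] by (simp add: dpowD_eq_Sigma[OF n] cart_decomps_def permact_def)
qed

lemma equiv_sym_orbit_rel: "equiv (dpowD F n S) (sym_orbit_rel F n S)"
proof (rule equivI)
  show "refl_on (dpowD F n S) (sym_orbit_rel F n S)"
    by (auto simp: refl_on_def sym_orbit_rel_def intro!: exI[of _ id] permutes_id
        simp flip: permact_id)
  show "sym (sym_orbit_rel F n S)"
  proof (rule symI)
    fix a b assume "(a, b) \<in> sym_orbit_rel F n S"
    then obtain \<sigma> where \<sigma>: "\<sigma> permutes {..<n}" and b: "b = permact \<sigma> a"
      and "a \<in> dpowD F n S" "b \<in> dpowD F n S"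
      by (auto simp: sym_orbit_rel_def)
    moreover have "permact (inv \<sigma>) b = a"
    proof -
      have "permact (inv \<sigma>) b = permact (\<sigma> \<circ> inv \<sigma>) a"
        unfolding b using length_dpowD[OF \<open>a \<in> dpowD F n S\<close>] permutes_inv[OF \<sigma>]
        by (intro permact_permact) (auto dest: permutes_in_image)
      also have "\<dots> = permact id a"
        using length_dpowD[OF \<open>a \<in> dpowD F n S\<close>] permutes_inverses(1)[OF \<sigma>]
        by (intro permact_cong) auto
      finally show ?thesis
        by (simp add: permact_id)
    qed
    ultimately show "(b, a) \<in> sym_orbit_rel F n S"
      using permutes_inv[OF \<sigma>] by (auto simp: sym_orbit_rel_def)
  qed
  show "trans (sym_orbit_rel F n S)"
  proof (rule transI)
    fix a b c assume "(a, b) \<in> sym_orbit_rel F n S" "(b, c) \<in> sym_orbit_rel F n S"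
    then obtain \<sigma> \<tau> where \<sigma>: "\<sigma> permutes {..<n}" and \<tau>: "\<tau> permutes {..<n}"
      and "b = permact \<sigma> a" "c = permact \<tau> b" "a \<in> dpowD F n S" "c \<in> dpowD F n S"
      by (auto simp: sym_orbit_rel_def)
    moreover from this have "c = permact (\<sigma> \<circ> \<tau>) a"
      using length_dpowD[of a] by (auto intro!: permact_permact dest: permutes_in_image)
    ultimately show "(a, c) \<in> sym_orbit_rel F n S"
      using permutes_compose[OF \<tau> \<sigma>] by (auto simp: sym_orbit_rel_def)
  qed
qed (auto simp: sym_orbit_rel_def)

lemma sym_orbit_rel_class:
  "a \<in> dpowD F n S \<Longrightarrow>
     sym_orbit_rel F n S `` {a} = (\<lambda>\<sigma>. permact \<sigma> a) ` {\<sigma>. \<sigma> permutes {..<n}}"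
  by (auto simp: sym_orbit_rel_def permact_in_dpowD)

lemma distinct_dpowD_factors:
  assumes ds: "dirichlet_species F Fm" and one: "\<forall>S. card S = 1 \<longrightarrow> F S = {}"
    and a: "a \<in> dpowD F n S"
  shows "distinct (fst a)"
proof (cases "n = 0")
  case True
  then show ?thesis
    using length_dpowD[OF a] by simp
next
  case n: False
  obtain \<pi>s xs where a_eq: "a = (\<pi>s, xs)"
    by (cases a)
  have cd: "cart_decomp S \<pi>s" and len: "length \<pi>s = n"
    and xs: "xs \<in> list_Pi n (\<lambda>i. F (lab ` (S // \<pi>s ! i)))"
    using a a_eq by (auto simp: dpowD_eq_Sigma[OF n] cart_decomps_def)
  have "\<pi>s ! i \<noteq> \<pi>s ! j" if "i < n" "j < n" "i \<noteq> j" for i j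
  proof
    assume eq: "\<pi>s ! i = \<pi>s ! j"
    have "F (lab ` (S // \<pi>s ! i)) = {}"
    proof (cases "S // \<pi>s ! i = {}")
      case False
      then obtain C where "C \<in> S // \<pi>s ! i"
        by (meson equals0I)
      then have "S // \<pi>s ! i = {C}"
        using cart_decomp_repeated_factor[OF cd _ _ _ eq] that len by blast
      then show ?thesis
        using one by simp
    qed (use ds in \<open>simp add: dirichlet_species_def\<close>)
    moreover have "xs ! i \<in> F (lab ` (S // \<pi>s ! i))"
      using xs that by (simp add: list_Pi_def)
    ultimately show False
      by simp
  qed
  then show ?thesis
    using a_eq len by (simp add: distinct_conv_nth)
qed

lemma card_eq_mult_card_quotient:
  assumes "finite A" "equiv A r" "\<And>a. a \<in> A \<Longrightarrow> card (r `` {a}) = m"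
  shows "card A = m * card (A // r)"
proof -
  have "m * card (A // r) = card (\<Union>(A // r))"
  proof (rule card_partition)
    show "finite (A // r)"
      using finite_quotient[OF assms(1) equiv_type[OF assms(2)]] .
    show "finite (\<Union>(A // r))"
      using assms(1) by (simp add: Union_quotient[OF assms(2)])
    show "card C = m" if "C \<in> A // r" for C
      using that assms(3) by (auto elim: quotientE)
    show "C \<inter> D = {}" if "C \<in> A // r" "D \<in> A // r" "C \<noteq> D" for C D
      using quotient_disj[OF assms(2) that(1,2)] that(3) by blast
  qed
  then show ?thesis
    using Union_quotient[OF assms(2)] by simp
qed

lemma card_dpowD_orbits:
  assumes ds: "dirichlet_species F Fm" and "tame F" and one: "\<forall>S. card S = 1 \<longrightarrow> F S = {}"
    and "finite S"
  shows "real (card (dpowD F n S // sym_orbit_rel F n S))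
    = fact (card S) * dpow (dseries F) n (card S) / fact n"
proof -
  have orbit_card: "card (sym_orbit_rel F n S `` {a}) = fact n" if "a \<in> dpowD F n S" for a
    using card_image[OF inj_on_permact[OF distinct_dpowD_factors[OF ds one that]]]
      length_dpowD[OF that] card_permutations[of "{..<n}" n]
    by (simp add: sym_orbit_rel_class[OF that])
  have "card (dpowD F n S) = fact n * card (dpowD F n S // sym_orbit_rel F n S)"
    by (rule card_eq_mult_card_quotient[OF finite_dpowD[OF assms(2,4)] equiv_sym_orbit_rel orbit_card])
  then show ?thesis
    using card_dpowD[OF ds assms(2,4), of n] by (simp add: field_simps)
qed

lemma finite_dpowD_orbits: "tame F \<Longrightarrow> finite S \<Longrightarrow> finite (dpowD F n S // sym_orbit_rel F n S)"
  using finite_dpowD equiv_sym_orbit_rel equiv_type finite_quotient by metis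

lemma expD_eq_Sigma:
  assumes "dirichlet_species F Fm" "tame F" "\<forall>S. card S = 1 \<longrightarrow> F S = {}" "finite S"
  shows "expD F S = Sigma {..card S} (\<lambda>n. dpowD F n S // sym_orbit_rel F n S)"
proof -
  have "dpowD F n S // sym_orbit_rel F n S = {}" if "\<not> n \<le> card S" for n
    using dpowD_eq_empty_if_less[OF assms] that by simp
  then show ?thesis
    unfolding expD_def by (auto simp del: quotient_is_empty) (metis empty_iff)
qed

lemma card_expD:
  assumes "dirichlet_species F Fm" "tame F" "\<forall>S. card S = 1 \<longrightarrow> F S = {}" "finite S"
  shows "real (card (expD F S)) = fact (card S) * (\<Sum>n\<le>card S. dpow (dseries F) n (card S) / fact n)"
proof -
  have "card (expD F S) = (\<Sum>n\<le>card S. card (dpowD F n S // sym_orbit_rel F n S))"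
    unfolding expD_eq_Sigma[OF assms]
    using finite_dpowD_orbits[OF assms(2,4)] by (intro card_SigmaI) auto
  then show ?thesis
    by (simp add: card_dpowD_orbits[OF assms] sum_distrib_left)
qed

theorem lemma3p5:
  fixes F :: "V set \<Rightarrow> 'b set" and Fm :: "(V \<Rightarrow> V) \<Rightarrow> V set \<Rightarrow> 'b \<Rightarrow> 'b"
  assumes "dirichlet_species F Fm"
    and "tame F"
    and "\<forall>S. card S = 1 \<longrightarrow> F S = {}"
  shows "tame (expD F) \<and> dseries (expD F) = dexp (dseries F)"
proof
  show "tame (expD F)"
    unfolding tame_def using expD_eq_Sigma[OF assms] finite_dpowD_orbits[OF assms(2)] by auto
  show "dseries (expD F) = dexp (dseries F)"
  proof
    fix k
    show "dseries (expD F) k = dexp (dseries F) k"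
    proof (cases "k = 0")
      case False
      have "card (Atom ` {..<k}) = k"
        by (simp add: card_image inj_on_def)
      then show ?thesis
        using False card_expD[OF assms, of "Atom ` {..<k}"]
          dexp_eq_sum[where f = "dseries F", OF dseries_at_1[OF assms(3)]]
        by (simp add: dseries_def)
    qed (simp add: dseries_def dexp_def dpow_at_0)
  qed
qed

end
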